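(* Let $p(y)$ be a probability distribution on a space $\mathcal{Y}$ and, for each $y\in\mathcal{Y}$, let $p(z\mid y)$ be a probability distribution on a space $\mathcal{Z}$. Let $\phi:\mathcal{Y}\times\mathcal{Z}\to\Phi\subseteq\mathbb{R}^{D_\phi}$ be such that $\gamma(y)=\mathbb{E}_{z\sim p(z\mid y)}[\phi(y,z)]$ exists for (almost) every $y$, and let $f:\mathcal{Y}\times\Phi\to\mathbb{R}^{D_f}$ be such that $y\mapsto f(y,\gamma(y))$ is integrable under $p(y)$. Set $I=\mathbb{E}_{y\sim p(y)}[f(y,\gamma(y))]$. On one probability space, let $y_1,y_2,\dots$ be i.i.d. with law $p(y)$ and, for each $n$, conditionally on $y_n$ let $z_{n,1},z_{n,2},\dots$ be i.i.d. with law $p(z\mid y_n)$ (independently across $n$). For $N,M\in\mathbb{N}$ define $$(\hat\gamma_M)_n=\frac1M\sum_{m=1}^M\phi(y_n,z_{n,m}),\qquad I_{N,M}=\frac1N\sum_{n=1}^N f\big(y_n,(\hat\gamma_M)_n\big),$$ and $(\epsilon_M)_n=\big\|f(y_n,(\hat\gamma_M)_n)-f(y_n,\gamma(y_n))\big\|$. If $\mathbb{E}[(\epsilon_M)_1]\to0$ as $M\to\infty$, then there exists a function $\tau:\mathbb{N}\to\mathbb{N}$ such that $I_{\tau(M),M}\to I$ almost surely as $M\to\infty$.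
   Context: This is the nested Monte Carlo (NMC) estimator: an outer Monte Carlo average over $y$ of $f$ evaluated at an inner Monte Carlo estimate of the conditional expectation $\gamma(y)$. Note that for fixed $M$ the variables $(\epsilon_M)_n$, $n\in\mathbb{N}$, are i.i.d. *)

theory Defs
  imports "HOL-Probability.Probability"
begin

definition nmc_row_law ::
  "'y measure \<Rightarrow> 'z measure \<Rightarrow> ('y \<Rightarrow> 'z measure) \<Rightarrow> ('y \<times> (nat \<Rightarrow> 'z)) measure" where
  "nmc_row_law P Z K =
     P \<bind> (\<lambda>y. distr (PiM UNIV (\<lambda>_. K y)) (P \<Otimes>\<^sub>M PiM UNIV (\<lambda>_. Z)) (\<lambda>zs. (y, zs)))"

definition nmc_gamma :: "('y \<Rightarrow> 'z measure) \<Rightarrow> ('y \<Rightarrow> 'z \<Rightarrow> 'c::euclidean_space) \<Rightarrow> 'y \<Rightarrow> 'c" where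
  "nmc_gamma K phi y = (\<integral>z. phi y z \<partial>K y)"

text \<open>Inner estimate (gamma_hat_M)_n; indices n, m start at 0 (n-th row uses z n 0, ..., z n (M-1)).\<close>
definition gamma_hat ::
  "('y \<Rightarrow> 'z \<Rightarrow> 'c::euclidean_space) \<Rightarrow> (nat \<Rightarrow> 'a \<Rightarrow> 'y) \<Rightarrow> (nat \<Rightarrow> nat \<Rightarrow> 'a \<Rightarrow> 'z)
     \<Rightarrow> nat \<Rightarrow> nat \<Rightarrow> 'a \<Rightarrow> 'c" where
  "gamma_hat phi y z M n \<omega> = (1 / real M) *\<^sub>R (\<Sum>m<M. phi (y n \<omega>) (z n m \<omega>))"

definition nmc_I ::
  "('y \<Rightarrow> 'c \<Rightarrow> 'd::euclidean_space) \<Rightarrow> ('y \<Rightarrow> 'z \<Rightarrow> 'c::euclidean_space) \<Rightarrow> (nat \<Rightarrow> 'a \<Rightarrow> 'y)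
     \<Rightarrow> (nat \<Rightarrow> nat \<Rightarrow> 'a \<Rightarrow> 'z) \<Rightarrow> nat \<Rightarrow> nat \<Rightarrow> 'a \<Rightarrow> 'd" where
  "nmc_I f phi y z N M \<omega> = (1 / real N) *\<^sub>R (\<Sum>n<N. f (y n \<omega>) (gamma_hat phi y z M n \<omega>))"

definition nmc_eps ::
  "('y \<Rightarrow> 'z measure) \<Rightarrow> ('y \<Rightarrow> 'c \<Rightarrow> 'd::euclidean_space) \<Rightarrow> ('y \<Rightarrow> 'z \<Rightarrow> 'c::euclidean_space)
     \<Rightarrow> (nat \<Rightarrow> 'a \<Rightarrow> 'y) \<Rightarrow> (nat \<Rightarrow> nat \<Rightarrow> 'a \<Rightarrow> 'z) \<Rightarrow> nat \<Rightarrow> nat \<Rightarrow> 'a \<Rightarrow> real" where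
  "nmc_eps K f phi y z M n \<omega> =
     norm (f (y n \<omega>) (gamma_hat phi y z M n \<omega>) - f (y n \<omega>) (nmc_gamma K phi (y n \<omega>)))"

end

theory Submission
  imports Defs
begin

text \<open>
  For fixed M, the weak law of large numbers (proved by
  truncation: Hoeffding's inequality for the clipped variables, Markov's inequality for the
  remainder) makes the average over n < N of the errors (eps_M)_n concentrate around
  e_M = E (eps_M)_0 and the average of f (y n) (gamma (y n)) concentrate around I, as N grows.
  Choosing tau M so that both deviations exceed 1/(M+1) with probability at most 2^-M,
  Borel-Cantelli makes them eventually small almost surely; since |I_{N,M} - I| is bounded by the
  first average plus the second deviation, |I_{tau M, M} - I| <= e_M + o(1) almost surely, and
  e_M tends to 0 by assumption.
\<close>

definition (in prob_space) tendsto_in_prob :: "(nat \<Rightarrow> 'a \<Rightarrow> 'b::metric_space) \<Rightarrow> 'b \<Rightarrow> bool" where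
  "tendsto_in_prob X c \<longleftrightarrow> (\<forall>\<eta>>0. (\<lambda>N. prob {\<omega>\<in>space M. \<eta> \<le> dist (X N \<omega>) c}) \<longlonglongrightarrow> 0)"

lemma
  fixes X Y :: "'a \<Rightarrow> real"
  assumes eq: "distr M borel X = distr M borel Y"
    and X: "X \<in> borel_measurable M" and Y: "Y \<in> borel_measurable M"
  shows integral_eq_of_distr_eq: "integral\<^sup>L M X = integral\<^sup>L M Y"
    and integrable_iff_of_distr_eq: "integrable M X \<longleftrightarrow> integrable M Y"
  using integral_distr[OF X, of "\<lambda>x. x"] integral_distr[OF Y, of "\<lambda>x. x"]
    integrable_distr_eq[OF X, of "\<lambda>x. x"] integrable_distr_eq[OF Y, of "\<lambda>x. x"]
  by (simp_all add: eq)

definition clip :: "real \<Rightarrow> real \<Rightarrow> real" where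
  "clip T x = max (- T) (min T x)"

lemma measurable_clip [measurable]: "clip T \<in> borel_measurable borel"
  unfolding clip_def[abs_def] by measurable

lemma integral_clip_remainder_tendsto:
  fixes u :: "'a \<Rightarrow> real"
  assumes u: "integrable M u"
  shows "(\<lambda>k. \<integral>x. \<bar>u x - clip (real k) (u x)\<bar> \<partial>M) \<longlonglongrightarrow> 0"
proof -
  have [measurable]: "u \<in> borel_measurable M"
    using u by auto
  have "(\<lambda>k. \<integral>x. \<bar>u x - clip (real k) (u x)\<bar> \<partial>M) \<longlonglongrightarrow> (\<integral>x. 0 \<partial>M)"
  proof (rule integral_dominated_convergence[where w="\<lambda>x. \<bar>u x\<bar>"])
    show "AE x in M. (\<lambda>k. \<bar>u x - clip (real k) (u x)\<bar>) \<longlonglongrightarrow> 0"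
    proof (intro AE_I2 tendsto_eventually)
      fix x
      obtain k0 :: nat where "\<bar>u x\<bar> \<le> real k0"
        using real_arch_simple by blast
      then show "eventually (\<lambda>k. \<bar>u x - clip (real k) (u x)\<bar> = 0) sequentially"
        unfolding eventually_sequentially by (intro exI[of _ k0]) (auto simp: clip_def)
    qed
    show "AE x in M. norm \<bar>u x - clip (real k) (u x)\<bar> \<le> \<bar>u x\<bar>" for k
      by (auto simp: clip_def)
  qed (use u in auto)
  then show ?thesis
    by simp
qed

lemma average_deviation_le:
  fixes x u :: "nat \<Rightarrow> real"
  shows "\<bar>(\<Sum>n<N. x n) / real N - \<mu>\<bar>
           \<le> \<bar>(\<Sum>n<N. u n) / real N - \<nu>\<bar> + (\<Sum>n<N. \<bar>x n - u n\<bar>) / real N + \<bar>\<nu> - \<mu>\<bar>"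
proof -
  have "\<bar>(\<Sum>n<N. x n) / real N - (\<Sum>n<N. u n) / real N\<bar> = \<bar>\<Sum>n<N. x n - u n\<bar> / real N"
    by (simp add: sum_subtractf diff_divide_distrib[symmetric] abs_divide)
  also have "\<dots> \<le> (\<Sum>n<N. \<bar>x n - u n\<bar>) / real N"
    by (intro divide_right_mono sum_abs) simp
  finally show ?thesis
    by linarith
qed

lemma (in prob_space) prob_average_ge_le:
  fixes V :: "nat \<Rightarrow> 'a \<Rightarrow> real"
  assumes int: "\<And>n. integrable M (V n)" and E: "\<And>n. expectation (V n) = expectation (V 0)"
    and nonneg: "\<And>n \<omega>. 0 \<le> V n \<omega>" and "c > 0"
  shows "prob {\<omega>\<in>space M. c \<le> (\<Sum>n<N. V n \<omega>) / real N} \<le> expectation (V 0) / c"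
proof (cases "N = 0")
  case True
  then show ?thesis
    using \<open>c > 0\<close> nonneg by (simp add: integral_nonneg)
next
  case False
  have "prob {\<omega>\<in>space M. c \<le> (\<Sum>n<N. V n \<omega>) / real N} \<le> (\<integral>\<omega>. (\<Sum>n<N. V n \<omega>) / real N \<partial>M) / c"
    by (rule integral_Markov_inequality_measure[where A="space M"])
      (use int nonneg \<open>c > 0\<close> in \<open>auto intro!: sum_nonneg divide_nonneg_nonneg\<close>)
  also have "(\<integral>\<omega>. (\<Sum>n<N. V n \<omega>) / real N \<partial>M) = (\<Sum>n<N. expectation (V n)) / real N"
    using int by simp
  also have "\<dots> = expectation (V 0)"
    using False by (simp add: sum.cong[OF refl E])
  finally show ?thesis .
qed

lemma (in prob_space) iid_compose:
  assumes indep: "indep_vars (\<lambda>_. N) X UNIV" and distr_X: "\<And>n. distr M N (X n) = distr M N (X 0)"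
    and h: "h \<in> N \<rightarrow>\<^sub>M L"
  shows "indep_vars (\<lambda>_. L) (\<lambda>n \<omega>. h (X n \<omega>)) UNIV"
    and "distr M L (\<lambda>\<omega>. h (X n \<omega>)) = distr M L (\<lambda>\<omega>. h (X 0 \<omega>))"
proof -
  show "indep_vars (\<lambda>_. L) (\<lambda>n \<omega>. h (X n \<omega>)) UNIV"
    using indep_vars_compose2[OF indep] h by simp
  have X: "X n \<in> M \<rightarrow>\<^sub>M N" for n
    using indep by (auto simp: indep_vars_def)
  show "distr M L (\<lambda>\<omega>. h (X n \<omega>)) = distr M L (\<lambda>\<omega>. h (X 0 \<omega>))"
    using distr_X[of n] distr_distr[OF h X, of n] distr_distr[OF h X, of 0] by (simp add: comp_def)
qed

lemma (in prob_space) bounded_iid_average_tendsto_in_prob: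
  fixes X :: "nat \<Rightarrow> 'a \<Rightarrow> real"
  assumes indep: "indep_vars (\<lambda>_. borel) X UNIV"
    and distr_X: "\<And>n. distr M borel (X n) = distr M borel (X 0)"
    and bounded: "AE \<omega> in M. X 0 \<omega> \<in> {a..b}" and "a < b"
  shows "tendsto_in_prob (\<lambda>N \<omega>. (\<Sum>n<N. X n \<omega>) / real N) (expectation (X 0))"
  unfolding tendsto_in_prob_def dist_real_def
proof (intro allI impI)
  fix \<epsilon> :: real assume "\<epsilon> > 0"
  have [measurable]: "X 0 \<in> borel_measurable M"
    using indep by (auto simp: indep_vars_def)
  have Hoeffding: "prob {\<omega>\<in>space M. \<epsilon> \<le> \<bar>(\<Sum>n<N. X n \<omega>) / real N - expectation (X 0)\<bar>}
      \<le> 2 * exp (real N * (-2 * \<epsilon>\<^sup>2 / (b - a)\<^sup>2))" if "N > 0" for N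
  proof -
    interpret Hoeffding_ineq_iid M "{..<N}" X "X 0" a b "expectation (X 0)"
    proof unfold_locales
      show "indep_vars (\<lambda>_. borel) X {..<N}"
        by (rule indep_vars_subset[OF indep]) simp
    qed (use distr_X bounded in simp_all)
    have "prob {\<omega>\<in>space M. \<bar>(\<Sum>n\<in>{..<N}. X n \<omega>) / real (card {..<N}) - expectation (X 0)\<bar> \<ge> \<epsilon>}
          \<le> 2 * exp (-2 * real (card {..<N}) * \<epsilon>\<^sup>2 / (b - a)\<^sup>2)"
      by (rule Hoeffding_ineq_abs_ge') (use \<open>N > 0\<close> \<open>a < b\<close> \<open>\<epsilon> > 0\<close> in auto)
    moreover have "-2 * real N * \<epsilon>\<^sup>2 / (b - a)\<^sup>2 = real N * (-2 * \<epsilon>\<^sup>2 / (b - a)\<^sup>2)"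
      by simp
    ultimately show ?thesis
      by (simp only: card_lessThan)
  qed
  have exp_lim: "(\<lambda>N. 2 * exp (real N * (-2 * \<epsilon>\<^sup>2 / (b - a)\<^sup>2))) \<longlonglongrightarrow> 0"
    unfolding exp_of_nat_mult using \<open>a < b\<close> \<open>\<epsilon> > 0\<close>
    by (intro tendsto_mult_right_zero LIMSEQ_realpow_zero) auto
  show "(\<lambda>N. prob {\<omega>\<in>space M. \<epsilon> \<le> \<bar>(\<Sum>n<N. X n \<omega>) / real N - expectation (X 0)\<bar>}) \<longlonglongrightarrow> 0"
    by (rule tendsto_sandwich[OF _ eventually_mono[OF eventually_gt_at_top[of 0] Hoeffding] tendsto_const exp_lim])
      simp
qed

lemma (in prob_space) prob_average_deviation_le:
  fixes X U :: "nat \<Rightarrow> 'a \<Rightarrow> real"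
  assumes [measurable]: "\<And>n. X n \<in> borel_measurable M" "\<And>n. U n \<in> borel_measurable M"
    and distr_V: "\<And>n. distr M borel (\<lambda>\<omega>. \<bar>X n \<omega> - U n \<omega>\<bar>) = distr M borel (\<lambda>\<omega>. \<bar>X 0 \<omega> - U 0 \<omega>\<bar>)"
    and int_V: "integrable M (\<lambda>\<omega>. \<bar>X 0 \<omega> - U 0 \<omega>\<bar>)"
    and "\<epsilon> > 0" and close: "\<bar>\<nu> - \<mu>\<bar> \<le> \<epsilon>/3"
  shows "prob {\<omega>\<in>space M. \<epsilon> \<le> \<bar>(\<Sum>n<N. X n \<omega>) / real N - \<mu>\<bar>}
           \<le> prob {\<omega>\<in>space M. \<epsilon>/3 \<le> \<bar>(\<Sum>n<N. U n \<omega>) / real N - \<nu>\<bar>}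
              + expectation (\<lambda>\<omega>. \<bar>X 0 \<omega> - U 0 \<omega>\<bar>) / (\<epsilon>/3)"
proof -
  let ?A = "{\<omega>\<in>space M. \<epsilon>/3 \<le> \<bar>(\<Sum>n<N. U n \<omega>) / real N - \<nu>\<bar>}"
  let ?B = "{\<omega>\<in>space M. \<epsilon>/3 \<le> (\<Sum>n<N. \<bar>X n \<omega> - U n \<omega>\<bar>) / real N}"
  have "{\<omega>\<in>space M. \<epsilon> \<le> \<bar>(\<Sum>n<N. X n \<omega>) / real N - \<mu>\<bar>} \<subseteq> ?A \<union> ?B"
  proof (intro subsetI UnCI)
    fix \<omega> assume "\<omega> \<in> {\<omega>\<in>space M. \<epsilon> \<le> \<bar>(\<Sum>n<N. X n \<omega>) / real N - \<mu>\<bar>}" "\<omega> \<notin> ?B"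
    then have \<omega>: "\<omega> \<in> space M" "\<epsilon> \<le> \<bar>(\<Sum>n<N. X n \<omega>) / real N - \<mu>\<bar>"
      and "\<not> \<epsilon>/3 \<le> (\<Sum>n<N. \<bar>X n \<omega> - U n \<omega>\<bar>) / real N"
      by auto
    then have "\<epsilon>/3 \<le> \<bar>(\<Sum>n<N. U n \<omega>) / real N - \<nu>\<bar>"
      using average_deviation_le[of "\<lambda>n. X n \<omega>" N \<mu> "\<lambda>n. U n \<omega>" \<nu>] close by linarith
    then show "\<omega> \<in> ?A"
      using \<omega> by blast
  qed
  then have "prob {\<omega>\<in>space M. \<epsilon> \<le> \<bar>(\<Sum>n<N. X n \<omega>) / real N - \<mu>\<bar>} \<le> prob ?A + prob ?B"
    by (intro order_trans[OF finite_measure_mono measure_Un_le]) auto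
  also have "prob ?B \<le> expectation (\<lambda>\<omega>. \<bar>X 0 \<omega> - U 0 \<omega>\<bar>) / (\<epsilon>/3)"
  proof (rule prob_average_ge_le)
    show "integrable M (\<lambda>\<omega>. \<bar>X n \<omega> - U n \<omega>\<bar>)" for n
      using integrable_iff_of_distr_eq[OF distr_V] int_V by simp
    show "expectation (\<lambda>\<omega>. \<bar>X n \<omega> - U n \<omega>\<bar>) = expectation (\<lambda>\<omega>. \<bar>X 0 \<omega> - U 0 \<omega>\<bar>)" for n
      using integral_eq_of_distr_eq[OF distr_V] by simp
  qed (use \<open>\<epsilon> > 0\<close> in auto)
  finally show ?thesis
    by simp
qed

lemma (in prob_space) prob_average_deviation_le_clip:
  fixes X :: "nat \<Rightarrow> 'a \<Rightarrow> real"
  assumes indep: "indep_vars (\<lambda>_. borel) X UNIV"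
    and distr_X: "\<And>n. distr M borel (X n) = distr M borel (X 0)"
    and int: "integrable M (X 0)" and "\<epsilon> > 0"
    and small: "(\<integral>\<omega>. \<bar>X 0 \<omega> - clip T (X 0 \<omega>)\<bar> \<partial>M) \<le> \<epsilon>/3"
  shows "prob {\<omega>\<in>space M. \<epsilon> \<le> \<bar>(\<Sum>n<N. X n \<omega>) / real N - expectation (X 0)\<bar>}
      \<le> prob {\<omega>\<in>space M. \<epsilon>/3 \<le> \<bar>(\<Sum>n<N. clip T (X n \<omega>)) / real N - expectation (\<lambda>\<omega>. clip T (X 0 \<omega>))\<bar>}
         + (\<integral>\<omega>. \<bar>X 0 \<omega> - clip T (X 0 \<omega>)\<bar> \<partial>M) / (\<epsilon>/3)"
proof (rule prob_average_deviation_le)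
  show X_measurable [measurable]: "X n \<in> borel_measurable M" for n
    using indep by (auto simp: indep_vars_def)
  show "(\<lambda>\<omega>. clip T (X n \<omega>)) \<in> borel_measurable M" for n
    by measurable
  have "(\<lambda>x. \<bar>x - clip T x\<bar>) \<in> borel_measurable borel"
    by measurable
  then show "distr M borel (\<lambda>\<omega>. \<bar>X n \<omega> - clip T (X n \<omega>)\<bar>) = distr M borel (\<lambda>\<omega>. \<bar>X 0 \<omega> - clip T (X 0 \<omega>)\<bar>)" for n
    by (rule iid_compose(2)[OF indep distr_X])
  have int_clip: "integrable M (\<lambda>\<omega>. clip T (X 0 \<omega>))"
    by (intro integrable_const_bound[where B="\<bar>T\<bar>"]) (auto simp: clip_def)
  then show "integrable M (\<lambda>\<omega>. \<bar>X 0 \<omega> - clip T (X 0 \<omega>)\<bar>)"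
    by (intro integrable_abs Bochner_Integration.integrable_diff int)
  have "\<bar>expectation (\<lambda>\<omega>. clip T (X 0 \<omega>)) - expectation (X 0)\<bar> \<le> (\<integral>\<omega>. \<bar>X 0 \<omega> - clip T (X 0 \<omega>)\<bar> \<partial>M)"
    using int int_clip integral_abs_bound[of M "\<lambda>\<omega>. X 0 \<omega> - clip T (X 0 \<omega>)"] by (simp add: abs_minus_commute)
  then show "\<bar>expectation (\<lambda>\<omega>. clip T (X 0 \<omega>)) - expectation (X 0)\<bar> \<le> \<epsilon>/3"
    using small by linarith
qed fact

theorem (in prob_space) weak_law_of_large_numbers:
  fixes X :: "nat \<Rightarrow> 'a \<Rightarrow> real"
  assumes indep: "indep_vars (\<lambda>_. borel) X UNIV"
    and distr_X: "\<And>n. distr M borel (X n) = distr M borel (X 0)"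
    and int: "integrable M (X 0)"
  shows "tendsto_in_prob (\<lambda>N \<omega>. (\<Sum>n<N. X n \<omega>) / real N) (expectation (X 0))"
  unfolding tendsto_in_prob_def dist_real_def
proof (intro allI impI order_tendstoI)
  fix \<epsilon> a :: real assume "a < 0"
  then show "eventually (\<lambda>N. a < prob {\<omega>\<in>space M. \<epsilon> \<le> \<bar>(\<Sum>n<N. X n \<omega>) / real N - expectation (X 0)\<bar>})
          sequentially"
    by (simp add: less_le_trans[OF _ measure_nonneg])
next
  fix \<epsilon> \<delta> :: real assume "\<epsilon> > 0" "\<delta> > 0"
  obtain k :: nat where "k > 0"
    and small: "(\<integral>\<omega>. \<bar>X 0 \<omega> - clip (real k) (X 0 \<omega>)\<bar> \<partial>M) < min (\<epsilon>/3) (\<epsilon> * \<delta> / 6)"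
    using eventually_conj[OF eventually_gt_at_top[of 0]
        order_tendstoD(2)[OF integral_clip_remainder_tendsto[OF int], of "min (\<epsilon>/3) (\<epsilon> * \<delta> / 6)"]]
      \<open>\<epsilon> > 0\<close> \<open>\<delta> > 0\<close> by (auto simp: eventually_sequentially)
  have "tendsto_in_prob (\<lambda>N \<omega>. (\<Sum>n<N. clip (real k) (X n \<omega>)) / real N) (expectation (\<lambda>\<omega>. clip (real k) (X 0 \<omega>)))"
    by (rule bounded_iid_average_tendsto_in_prob[OF iid_compose[OF indep distr_X measurable_clip],
          where a="- real k" and b="real k"]) (use \<open>k > 0\<close> in \<open>auto simp: clip_def\<close>)
  then have "(\<lambda>N. prob {\<omega>\<in>space M. \<epsilon>/3 \<le> \<bar>(\<Sum>n<N. clip (real k) (X n \<omega>)) / real N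
                  - expectation (\<lambda>\<omega>. clip (real k) (X 0 \<omega>))\<bar>}) \<longlonglongrightarrow> 0"
    unfolding tendsto_in_prob_def dist_real_def using \<open>\<epsilon> > 0\<close> by (auto dest: spec[of _ "\<epsilon>/3"])
  then have "eventually (\<lambda>N. prob {\<omega>\<in>space M. \<epsilon>/3 \<le> \<bar>(\<Sum>n<N. clip (real k) (X n \<omega>)) / real N
                  - expectation (\<lambda>\<omega>. clip (real k) (X 0 \<omega>))\<bar>} < \<delta>/2) sequentially"
    by (rule order_tendstoD(2)) (use \<open>\<delta> > 0\<close> in simp)
  then show "eventually (\<lambda>N. prob {\<omega>\<in>space M. \<epsilon> \<le> \<bar>(\<Sum>n<N. X n \<omega>) / real N - expectation (X 0)\<bar>} < \<delta>)
      sequentially"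
  proof (elim eventually_mono)
    fix N
    have "prob {\<omega>\<in>space M. \<epsilon> \<le> \<bar>(\<Sum>n<N. X n \<omega>) / real N - expectation (X 0)\<bar>}
        \<le> prob {\<omega>\<in>space M. \<epsilon>/3 \<le> \<bar>(\<Sum>n<N. clip (real k) (X n \<omega>)) / real N
              - expectation (\<lambda>\<omega>. clip (real k) (X 0 \<omega>))\<bar>}
          + (\<integral>\<omega>. \<bar>X 0 \<omega> - clip (real k) (X 0 \<omega>)\<bar> \<partial>M) / (\<epsilon>/3)"
      using small by (intro prob_average_deviation_le_clip[OF indep distr_X int \<open>\<epsilon> > 0\<close>]) simp
    moreover have "(\<integral>\<omega>. \<bar>X 0 \<omega> - clip (real k) (X 0 \<omega>)\<bar> \<partial>M) / (\<epsilon>/3) < \<delta>/2"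
      using small \<open>\<epsilon> > 0\<close> by (simp add: field_simps)
    ultimately show "prob {\<omega>\<in>space M. \<epsilon>/3 \<le> \<bar>(\<Sum>n<N. clip (real k) (X n \<omega>)) / real N
          - expectation (\<lambda>\<omega>. clip (real k) (X 0 \<omega>))\<bar>} < \<delta>/2
        \<Longrightarrow> prob {\<omega>\<in>space M. \<epsilon> \<le> \<bar>(\<Sum>n<N. X n \<omega>) / real N - expectation (X 0)\<bar>} < \<delta>"
      by linarith
  qed
qed

lemma (in finite_measure) measure_UN_tendsto_zero:
  assumes "finite I" and sets: "\<And>i N. i \<in> I \<Longrightarrow> A i N \<in> sets M"
    and lim: "\<And>i. i \<in> I \<Longrightarrow> (\<lambda>N. measure M (A i N)) \<longlonglongrightarrow> 0"
  shows "(\<lambda>N. measure M (\<Union>i\<in>I. A i N)) \<longlonglongrightarrow> 0"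
proof (rule tendsto_sandwich[where f="\<lambda>_. 0" and h="\<lambda>N. \<Sum>i\<in>I. measure M (A i N)"])
  show "eventually (\<lambda>N. measure M (\<Union>i\<in>I. A i N) \<le> (\<Sum>i\<in>I. measure M (A i N))) sequentially"
    using finite_measure_subadditive_finite[OF \<open>finite I\<close>, of "\<lambda>i. A i _"] sets
    by (auto intro!: always_eventually)
  show "(\<lambda>N. \<Sum>i\<in>I. measure M (A i N)) \<longlonglongrightarrow> 0"
    using lim by (rule tendsto_null_sum)
qed auto

lemma norm_ge_imp_Basis_inner_ge:
  fixes v :: "'a::euclidean_space"
  assumes "\<epsilon> \<le> norm v"
  shows "\<exists>b\<in>Basis. \<epsilon> / real DIM('a) \<le> \<bar>v \<bullet> b\<bar>"
proof (rule ccontr)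
  assume "\<not> ?thesis"
  then have "(\<Sum>b\<in>Basis. \<bar>v \<bullet> b\<bar>) < (\<Sum>b\<in>(Basis::'a set). \<epsilon> / real DIM('a))"
    by (intro sum_strict_mono) (auto simp: not_le)
  then show False
    using assms norm_le_l1[of v] by simp
qed

theorem (in prob_space) weak_law_of_large_numbers_euclidean:
  fixes X :: "nat \<Rightarrow> 'a \<Rightarrow> 'd::euclidean_space"
  assumes indep: "indep_vars (\<lambda>_. borel) X UNIV"
    and distr_X: "\<And>n. distr M borel (X n) = distr M borel (X 0)"
    and int: "integrable M (X 0)"
  shows "tendsto_in_prob (\<lambda>N \<omega>. (1 / real N) *\<^sub>R (\<Sum>n<N. X n \<omega>)) (expectation (X 0))"
  unfolding tendsto_in_prob_def dist_norm
proof (intro allI impI)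
  fix \<epsilon> :: real assume "\<epsilon> > 0"
  have [measurable]: "X n \<in> borel_measurable M" for n
    using indep by (auto simp: indep_vars_def)
  define \<delta> where "\<delta> = \<epsilon> / real DIM('d)"
  define B where "B b N = {\<omega>\<in>space M. \<delta> \<le> \<bar>(\<Sum>n<N. X n \<omega> \<bullet> b) / real N - expectation (\<lambda>\<omega>. X 0 \<omega> \<bullet> b)\<bar>}"
    for b N
  have "(\<lambda>x::'d. x \<bullet> b) \<in> borel_measurable borel" for b
    by measurable
  then have "tendsto_in_prob (\<lambda>N \<omega>. (\<Sum>n<N. X n \<omega> \<bullet> b) / real N) (expectation (\<lambda>\<omega>. X 0 \<omega> \<bullet> b))" for b
    using int by (intro weak_law_of_large_numbers iid_compose[OF indep distr_X]) auto
  then have UN_lim: "(\<lambda>N. prob (\<Union>b\<in>Basis. B b N)) \<longlonglongrightarrow> 0"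
    using \<open>\<epsilon> > 0\<close> unfolding tendsto_in_prob_def dist_real_def
    by (intro measure_UN_tendsto_zero) (auto simp: B_def \<delta>_def)
  have "{\<omega>\<in>space M. \<epsilon> \<le> norm ((1 / real N) *\<^sub>R (\<Sum>n<N. X n \<omega>) - expectation (X 0))}
      \<subseteq> (\<Union>b\<in>Basis. B b N)" for N
  proof
    fix \<omega> assume \<omega>: "\<omega> \<in> {\<omega>\<in>space M. \<epsilon> \<le> norm ((1 / real N) *\<^sub>R (\<Sum>n<N. X n \<omega>) - expectation (X 0))}"
    then obtain b where "b \<in> Basis" and "\<delta> \<le> \<bar>((1 / real N) *\<^sub>R (\<Sum>n<N. X n \<omega>) - expectation (X 0)) \<bullet> b\<bar>"
      unfolding \<delta>_def using norm_ge_imp_Basis_inner_ge by blast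
    moreover have "((1 / real N) *\<^sub>R (\<Sum>n<N. X n \<omega>) - expectation (X 0)) \<bullet> b
        = (\<Sum>n<N. X n \<omega> \<bullet> b) / real N - expectation (\<lambda>\<omega>. X 0 \<omega> \<bullet> b)"
      using int by (simp add: inner_diff_left inner_sum_left)
    ultimately show "\<omega> \<in> (\<Union>b\<in>Basis. B b N)"
      using \<omega> by (auto simp: B_def)
  qed
  then have le_UN: "prob {\<omega>\<in>space M. \<epsilon> \<le> norm ((1 / real N) *\<^sub>R (\<Sum>n<N. X n \<omega>) - expectation (X 0))}
      \<le> prob (\<Union>b\<in>Basis. B b N)" for N
    by (rule finite_measure_mono) (auto simp: B_def)
  show "(\<lambda>N. prob {\<omega>\<in>space M. \<epsilon> \<le> norm ((1 / real N) *\<^sub>R (\<Sum>n<N. X n \<omega>) - expectation (X 0))})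
      \<longlonglongrightarrow> 0"
    by (rule tendsto_sandwich[OF _ always_eventually[OF allI[OF le_UN]] tendsto_const UN_lim]) simp
qed

lemma (in prob_space) tendsto_in_prob_Pair:
  fixes X :: "nat \<Rightarrow> 'a \<Rightarrow> 'b::{real_normed_vector, second_countable_topology}"
    and Y :: "nat \<Rightarrow> 'a \<Rightarrow> 'c::{real_normed_vector, second_countable_topology}"
  assumes [measurable]: "\<And>N. X N \<in> borel_measurable M" "\<And>N. Y N \<in> borel_measurable M"
    and X: "tendsto_in_prob X a" and Y: "tendsto_in_prob Y b"
  shows "tendsto_in_prob (\<lambda>N \<omega>. (X N \<omega>, Y N \<omega>)) (a, b)"
  unfolding tendsto_in_prob_def
proof (intro allI impI)
  fix \<eta> :: real assume "\<eta> > 0"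
  have "{\<omega>\<in>space M. \<eta> \<le> dist (X N \<omega>, Y N \<omega>) (a, b)}
      \<subseteq> {\<omega>\<in>space M. \<eta>/2 \<le> dist (X N \<omega>) a} \<union> {\<omega>\<in>space M. \<eta>/2 \<le> dist (Y N \<omega>) b}" for N
  proof (intro subsetI UnCI)
    fix \<omega> assume "\<omega> \<in> {\<omega>\<in>space M. \<eta> \<le> dist (X N \<omega>, Y N \<omega>) (a, b)}"
      and "\<omega> \<notin> {\<omega>\<in>space M. \<eta>/2 \<le> dist (Y N \<omega>) b}"
    moreover have "dist (X N \<omega>, Y N \<omega>) (a, b) \<le> dist (X N \<omega>) a + dist (Y N \<omega>) b"
      using norm_Pair_le[of "X N \<omega> - a" "Y N \<omega> - b"] by (simp add: dist_norm)
    ultimately show "\<omega> \<in> {\<omega>\<in>space M. \<eta>/2 \<le> dist (X N \<omega>) a}"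
      by auto
  qed
  then have le: "prob {\<omega>\<in>space M. \<eta> \<le> dist (X N \<omega>, Y N \<omega>) (a, b)}
      \<le> prob {\<omega>\<in>space M. \<eta>/2 \<le> dist (X N \<omega>) a} + prob {\<omega>\<in>space M. \<eta>/2 \<le> dist (Y N \<omega>) b}" for N
    by (rule order_trans[OF finite_measure_mono measure_Un_le]) measurable
  have sum_lim: "(\<lambda>N. prob {\<omega>\<in>space M. \<eta>/2 \<le> dist (X N \<omega>) a} + prob {\<omega>\<in>space M. \<eta>/2 \<le> dist (Y N \<omega>) b}) \<longlonglongrightarrow> 0"
    using X Y \<open>\<eta> > 0\<close> unfolding tendsto_in_prob_def
    by (intro tendsto_add_zero) (auto dest: spec[of _ "\<eta>/2"])
  show "(\<lambda>N. prob {\<omega>\<in>space M. \<eta> \<le> dist (X N \<omega>, Y N \<omega>) (a, b)}) \<longlonglongrightarrow> 0"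
    by (rule tendsto_sandwich[OF _ always_eventually[OF allI[OF le]] tendsto_const sum_lim]) simp
qed

lemma (in prob_space) AE_eventually_notin_diagonal:
  assumes sets: "\<And>k N. A k N \<in> events"
    and lim: "eventually (\<lambda>k. (\<lambda>N. prob (A k N)) \<longlonglongrightarrow> 0) sequentially"
  shows "\<exists>\<tau>. AE \<omega> in M. eventually (\<lambda>k. \<omega> \<notin> A k (\<tau> k)) sequentially"
proof -
  obtain k0 where k0: "\<And>k. k \<ge> k0 \<Longrightarrow> (\<lambda>N. prob (A k N)) \<longlonglongrightarrow> 0"
    using lim by (auto simp: eventually_sequentially)
  define \<tau> where "\<tau> k = (SOME N. prob (A k N) \<le> (1/2) ^ k)" for k
  have \<tau>: "prob (A k (\<tau> k)) \<le> (1/2) ^ k" if "k \<ge> k0" for k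
  proof -
    have "eventually (\<lambda>N. prob (A k N) < (1/2) ^ k) sequentially"
      by (rule order_tendstoD(2)[OF k0[OF that]]) simp
    then have "\<exists>N. prob (A k N) \<le> (1/2) ^ k"
      by (auto simp: eventually_sequentially intro: less_imp_le)
    then show ?thesis
      unfolding \<tau>_def by (rule someI_ex)
  qed
  have "AE \<omega> in M. eventually (\<lambda>k. \<omega> \<in> space M - A k (\<tau> k)) sequentially"
  proof (rule borel_cantelli_AE1)
    show "summable (\<lambda>k. prob (A k (\<tau> k)))"
      by (rule summable_comparison_test'[OF summable_geometric[of "1/2"], of k0]) (use \<tau> in auto)
  qed (use sets in \<open>auto simp: emeasure_eq_measure\<close>)
  then show ?thesis
    by (auto elim!: eventually_mono)
qed

lemma (in prob_space) AE_tendsto_diagonal: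
  fixes Y :: "nat \<Rightarrow> nat \<Rightarrow> 'a \<Rightarrow> 'b::{metric_space, second_countable_topology}"
  assumes [measurable]: "\<And>k N. Y k N \<in> borel_measurable M"
    and in_prob: "eventually (\<lambda>k. tendsto_in_prob (Y k) (c k)) sequentially"
    and c: "c \<longlonglongrightarrow> L"
  shows "\<exists>\<tau>. AE \<omega> in M. (\<lambda>k. Y k (\<tau> k) \<omega>) \<longlonglongrightarrow> L"
proof -
  define A where "A k N = {\<omega>\<in>space M. inverse (real (Suc k)) \<le> dist (Y k N \<omega>) (c k)}" for k N
  have "A k N \<in> events" for k N
    unfolding A_def by measurable
  moreover have "eventually (\<lambda>k. (\<lambda>N. prob (A k N)) \<longlonglongrightarrow> 0) sequentially"
    using in_prob by (elim eventually_mono) (simp add: A_def tendsto_in_prob_def)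
  ultimately obtain \<tau> where "AE \<omega> in M. eventually (\<lambda>k. \<omega> \<notin> A k (\<tau> k)) sequentially"
    using AE_eventually_notin_diagonal by blast
  then have "AE \<omega> in M. (\<lambda>k. Y k (\<tau> k) \<omega>) \<longlonglongrightarrow> L"
    using AE_space
  proof eventually_elim
    case (elim \<omega>)
    from elim(1) have "eventually (\<lambda>k. norm (dist (Y k (\<tau> k) \<omega>) L) \<le> inverse (real (Suc k)) + dist (c k) L)
        sequentially"
    proof (elim eventually_mono)
      fix k assume "\<omega> \<notin> A k (\<tau> k)"
      then show "norm (dist (Y k (\<tau> k) \<omega>) L) \<le> inverse (real (Suc k)) + dist (c k) L"
        using dist_triangle[of "Y k (\<tau> k) \<omega>" L "c k"] elim(2) by (auto simp: A_def)
    qed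
    moreover have "(\<lambda>k. inverse (real (Suc k)) + dist (c k) L) \<longlonglongrightarrow> 0"
      using c by (intro tendsto_add_zero LIMSEQ_inverse_real_of_nat) (rule tendsto_dist_iff[THEN iffD1])
    ultimately show "(\<lambda>k. Y k (\<tau> k) \<omega>) \<longlonglongrightarrow> L"
      by (subst tendsto_dist_iff) (rule Lim_null_comparison)
  qed
  then show ?thesis
    by blast
qed

lemma nn_integral_tendsto_zero_imp_integral:
  fixes u :: "nat \<Rightarrow> 'a \<Rightarrow> real"
  assumes [measurable]: "\<And>k. u k \<in> borel_measurable M" and nonneg: "\<And>k x. 0 \<le> u k x"
    and lim: "(\<lambda>k. \<integral>\<^sup>+ x. u k x \<partial>M) \<longlonglongrightarrow> 0"
  shows "eventually (\<lambda>k. integrable M (u k)) sequentially"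
    and "(\<lambda>k. \<integral>x. u k x \<partial>M) \<longlonglongrightarrow> 0"
proof -
  have finite: "eventually (\<lambda>k. (\<integral>\<^sup>+ x. u k x \<partial>M) < \<infinity>) sequentially"
    using order_tendstoD(2)[OF lim zero_less_one] by (elim eventually_mono) (erule less_trans, simp)
  then show int: "eventually (\<lambda>k. integrable M (u k)) sequentially"
    using nonneg by (auto elim!: eventually_mono intro!: integrableI_bounded)
  have "eventually (\<lambda>k. ennreal (\<integral>x. u k x \<partial>M) = (\<integral>\<^sup>+ x. u k x \<partial>M)) sequentially"
    using int nonneg by (auto elim!: eventually_mono intro!: nn_integral_eq_integral[symmetric])
  then have "(\<lambda>k. ennreal (\<integral>x. u k x \<partial>M)) \<longlonglongrightarrow> ennreal 0"
    using lim by (simp add: tendsto_cong)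
  then show "(\<lambda>k. \<integral>x. u k x \<partial>M) \<longlonglongrightarrow> 0"
    by (rule tendsto_ennrealD) (simp_all add: integral_nonneg nonneg)
qed

lemma norm_average_diff_le:
  fixes F G :: "nat \<Rightarrow> 'b::real_normed_vector"
  shows "norm ((1 / real N) *\<^sub>R (\<Sum>n<N. F n) - c)
           \<le> (\<Sum>n<N. norm (F n - G n)) / real N + norm ((1 / real N) *\<^sub>R (\<Sum>n<N. G n) - c)"
proof -
  have "(1 / real N) *\<^sub>R (\<Sum>n<N. F n) - c
          = (1 / real N) *\<^sub>R (\<Sum>n<N. F n - G n) + ((1 / real N) *\<^sub>R (\<Sum>n<N. G n) - c)"
    by (simp add: sum_subtractf scaleR_diff_right)
  also have "norm \<dots> \<le> (\<Sum>n<N. norm (F n - G n)) / real N + norm ((1 / real N) *\<^sub>R (\<Sum>n<N. G n) - c)"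
    by (rule order_trans[OF norm_triangle_ineq add_right_mono])
      (simp add: divide_right_mono norm_sum)
  finally show ?thesis .
qed

theorem (in prob_space) AE_tendsto_average_diagonal:
  fixes R :: "nat \<Rightarrow> 'a \<Rightarrow> 'r" and G :: "'r \<Rightarrow> 'd::euclidean_space" and F :: "nat \<Rightarrow> 'r \<Rightarrow> 'd"
  assumes indep: "indep_vars (\<lambda>_. S) R UNIV"
    and distr_R: "\<And>n. distr M S (R n) = distr M S (R 0)"
    and G [measurable]: "G \<in> borel_measurable S" and F [measurable]: "\<And>k. F k \<in> borel_measurable S"
    and int_G: "integrable M (\<lambda>\<omega>. G (R 0 \<omega>))"
    and L1: "(\<lambda>k. \<integral>\<^sup>+ \<omega>. norm (F k (R 0 \<omega>) - G (R 0 \<omega>)) \<partial>M) \<longlonglongrightarrow> 0"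
  shows "\<exists>\<tau>. AE \<omega> in M. (\<lambda>k. (1 / real (\<tau> k)) *\<^sub>R (\<Sum>n<\<tau> k. F k (R n \<omega>)))
           \<longlonglongrightarrow> expectation (\<lambda>\<omega>. G (R 0 \<omega>))"
proof -
  have [measurable]: "R n \<in> M \<rightarrow>\<^sub>M S" for n
    using indep by (auto simp: indep_vars_def)
  define \<mu> where "\<mu> = expectation (\<lambda>\<omega>. G (R 0 \<omega>))"
  define D where "D k r = norm (F k r - G r)" for k r
  have D_measurable [measurable]: "D k \<in> borel_measurable S" for k
    unfolding D_def by measurable
  define e where "e k = expectation (\<lambda>\<omega>. D k (R 0 \<omega>))" for k
  note L1_D = nn_integral_tendsto_zero_imp_integral[of "\<lambda>k \<omega>. D k (R 0 \<omega>)" M, folded e_def]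
  have int_D: "eventually (\<lambda>k. integrable M (\<lambda>\<omega>. D k (R 0 \<omega>))) sequentially"
    and e_lim: "e \<longlonglongrightarrow> 0"
    using L1_D L1 by (auto simp: D_def)
  define Y where "Y k N \<omega> = ((\<Sum>n<N. D k (R n \<omega>)) / real N, (1 / real N) *\<^sub>R (\<Sum>n<N. G (R n \<omega>)))"
    for k N \<omega>
  have Y_measurable: "Y k N \<in> borel_measurable M" for k N
    unfolding Y_def by measurable
  have "eventually (\<lambda>k. tendsto_in_prob (Y k) (e k, \<mu>)) sequentially"
    using int_D
  proof (elim eventually_mono)
    fix k assume "integrable M (\<lambda>\<omega>. D k (R 0 \<omega>))"
    then have "tendsto_in_prob (\<lambda>N \<omega>. (\<Sum>n<N. D k (R n \<omega>)) / real N) (e k)"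
      unfolding e_def by (intro weak_law_of_large_numbers iid_compose[OF indep distr_R D_measurable])
    moreover have "tendsto_in_prob (\<lambda>N \<omega>. (1 / real N) *\<^sub>R (\<Sum>n<N. G (R n \<omega>))) \<mu>"
      unfolding \<mu>_def using int_G by (intro weak_law_of_large_numbers_euclidean iid_compose[OF indep distr_R G])
    ultimately show "tendsto_in_prob (Y k) (e k, \<mu>)"
      unfolding Y_def by (intro tendsto_in_prob_Pair) measurable
  qed
  moreover have "(\<lambda>k. (e k, \<mu>)) \<longlonglongrightarrow> (0, \<mu>)"
    using e_lim by (intro tendsto_Pair tendsto_const)
  ultimately obtain \<tau> where "AE \<omega> in M. (\<lambda>k. Y k (\<tau> k) \<omega>) \<longlonglongrightarrow> (0, \<mu>)"
    using AE_tendsto_diagonal[where Y=Y and c="\<lambda>k. (e k, \<mu>)", OF Y_measurable] by blast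
  then have "AE \<omega> in M. (\<lambda>k. (1 / real (\<tau> k)) *\<^sub>R (\<Sum>n<\<tau> k. F k (R n \<omega>))) \<longlonglongrightarrow> \<mu>"
  proof (rule eventually_mono)
    fix \<omega> assume Y_lim: "(\<lambda>k. Y k (\<tau> k) \<omega>) \<longlonglongrightarrow> (0, \<mu>)"
    have bound: "norm ((1 / real (\<tau> k)) *\<^sub>R (\<Sum>n<\<tau> k. F k (R n \<omega>)) - \<mu>)
        \<le> fst (Y k (\<tau> k) \<omega>) + norm (snd (Y k (\<tau> k) \<omega>) - \<mu>)" for k
      using norm_average_diff_le[of "\<tau> k" "\<lambda>n. F k (R n \<omega>)" \<mu> "\<lambda>n. G (R n \<omega>)"]
      unfolding Y_def D_def by simp
    have "(\<lambda>k. fst (Y k (\<tau> k) \<omega>) + norm (snd (Y k (\<tau> k) \<omega>) - \<mu>)) \<longlonglongrightarrow> 0"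
      using tendsto_fst[OF Y_lim] tendsto_snd[OF Y_lim]
      by (intro tendsto_add_zero tendsto_norm_zero LIM_zero) simp_all
    then show "(\<lambda>k. (1 / real (\<tau> k)) *\<^sub>R (\<Sum>n<\<tau> k. F k (R n \<omega>))) \<longlonglongrightarrow> \<mu>"
      by (subst Lim_null) (rule Lim_null_comparison[OF always_eventually[OF allI[OF bound]]])
  qed
  then show ?thesis
    unfolding \<mu>_def by blast
qed

lemma measurable_PiM_kernel:
  fixes I :: "'i set"
  assumes K: "K \<in> P \<rightarrow>\<^sub>M prob_algebra Z"
  shows "(\<lambda>a. PiM I (\<lambda>_. K a)) \<in> P \<rightarrow>\<^sub>M prob_algebra (PiM I (\<lambda>_. Z))"
proof (rule measurable_prob_algebra_generated[OF sets_PiM Int_stable_prod_algebra prod_algebra_sets_into_space])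
  have Ka: "sets (K a) = sets Z" "prob_space (K a)" if "a \<in> space P" for a
    using measurable_space[OF K that] by (auto simp: space_prob_algebra)
  show "prob_space (PiM I (\<lambda>_. K a))" if "a \<in> space P" for a
    using Ka[OF that] by (intro prob_space_PiM) auto
  show "sets (PiM I (\<lambda>_. K a)) = sets (PiM I (\<lambda>_. Z))" if "a \<in> space P" for a
    using Ka[OF that] by (intro sets_PiM_cong) auto
  fix A assume "A \<in> prod_algebra I (\<lambda>_. Z)"
  then obtain J X where A: "A = prod_emb I (\<lambda>_. Z) J (\<Pi>\<^sub>E j\<in>J. X j)"
    and J: "finite J" "J \<subseteq> I" and X: "\<And>j. j \<in> J \<Longrightarrow> X j \<in> sets Z"
    by (metis prod_algebraE)
  have "emeasure (PiM I (\<lambda>_. K a)) A = (\<Prod>j\<in>J. emeasure (K a) (X j))" if a: "a \<in> space P" for a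
  proof -
    have "A = prod_emb I (\<lambda>_. K a) J (\<Pi>\<^sub>E j\<in>J. X j)"
      using sets_eq_imp_space_eq[OF Ka(1)[OF a]] by (simp add: A prod_emb_def)
    then show ?thesis
      using J X Ka[OF a] by (simp add: emeasure_PiM_emb)
  qed
  moreover have "(\<lambda>a. \<Prod>j\<in>J. emeasure (K a) (X j)) \<in> borel_measurable P"
    using J X measurable_prob_algebraD[OF K] by measurable
  ultimately show "(\<lambda>a. emeasure (PiM I (\<lambda>_. K a)) A) \<in> borel_measurable P"
    by (subst measurable_cong) auto
qed

lemma nmc_row_law_fst:
  assumes K: "K \<in> P \<rightarrow>\<^sub>M prob_algebra Z" and "prob_space P"
  shows "distr (nmc_row_law P Z K) P fst = P"
proof -
  let ?S = "P \<Otimes>\<^sub>M PiM (UNIV :: nat set) (\<lambda>_. Z)"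
  have PiK: "prob_space (PiM UNIV (\<lambda>_. K a))" "sets (PiM UNIV (\<lambda>_. K a)) = sets (PiM (UNIV :: nat set) (\<lambda>_. Z))"
    if "a \<in> space P" for a
    using measurable_space[OF measurable_PiM_kernel[OF K] that] by (auto simp: space_prob_algebra)
  have pair: "(\<lambda>zs. (a, zs)) \<in> PiM UNIV (\<lambda>_. K a) \<rightarrow>\<^sub>M ?S" if "a \<in> space P" for a
    unfolding measurable_cong_sets[OF PiK(2)[OF that] refl] by (rule measurable_Pair1'[OF that])
  have kernel: "(\<lambda>a. distr (PiM UNIV (\<lambda>_. K a)) ?S (\<lambda>zs. (a, zs))) \<in> P \<rightarrow>\<^sub>M subprob_algebra ?S"
    by (rule measurable_distr2[where f="\<lambda>a zs. (a, zs)",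
          OF _ measurable_prob_algebraD[OF measurable_PiM_kernel[OF K]]]) (simp add: case_prod_beta')
  have "distr (nmc_row_law P Z K) P fst = P \<bind> (\<lambda>a. distr (distr (PiM UNIV (\<lambda>_. K a)) ?S (\<lambda>zs. (a, zs))) P fst)"
    unfolding nmc_row_law_def
    by (rule distr_bind[OF kernel _ measurable_fst]) (rule prob_space.not_empty[OF \<open>prob_space P\<close>])
  also have "\<dots> = P \<bind> return P"
    by (intro bind_cong refl) (simp add: distr_distr[OF measurable_fst pair] comp_def prob_space.distr_const[OF PiK(1)])
  also have "\<dots> = P"
    by (rule bind_return'') simp
  finally show ?thesis .
qed

theorem theorem1:
  fixes \<Omega> :: "'a measure" and P :: "'y measure" and Z :: "'z measure"
    and K :: "'y \<Rightarrow> 'z measure"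
    and phi :: "'y \<Rightarrow> 'z \<Rightarrow> 'c::euclidean_space"
    and f :: "'y \<Rightarrow> 'c \<Rightarrow> 'd::euclidean_space"
    and y :: "nat \<Rightarrow> 'a \<Rightarrow> 'y" and z :: "nat \<Rightarrow> nat \<Rightarrow> 'a \<Rightarrow> 'z"
  assumes "prob_space \<Omega>"
    and "prob_space P"
    and K_kernel: "K \<in> P \<rightarrow>\<^sub>M prob_algebra Z"
    and phi_meas: "(\<lambda>(a, b). phi a b) \<in> borel_measurable (P \<Otimes>\<^sub>M Z)"
    and f_meas: "(\<lambda>(a, b). f a b) \<in> borel_measurable (P \<Otimes>\<^sub>M borel)"
    and gamma_exists: "AE a in P. integrable (K a) (phi a)"
    and f_integrable: "integrable P (\<lambda>a. f a (nmc_gamma K phi a))"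
    and rows_indep: "prob_space.indep_vars \<Omega> (\<lambda>_. P \<Otimes>\<^sub>M PiM UNIV (\<lambda>_. Z))
                       (\<lambda>n \<omega>. (y n \<omega>, \<lambda>m. z n m \<omega>)) UNIV"
    and rows_law: "\<And>n. distr \<Omega> (P \<Otimes>\<^sub>M PiM UNIV (\<lambda>_. Z)) (\<lambda>\<omega>. (y n \<omega>, \<lambda>m. z n m \<omega>))
                        = nmc_row_law P Z K"
    and eps_to_0: "(\<lambda>M. \<integral>\<^sup>+ \<omega>. ennreal (nmc_eps K f phi y z M 0 \<omega>) \<partial>\<Omega>) \<longlonglongrightarrow> 0"
  shows "\<exists>\<tau> :: nat \<Rightarrow> nat. AE \<omega> in \<Omega>.
           (\<lambda>M. nmc_I f phi y z (\<tau> M) M \<omega>) \<longlonglongrightarrow> (\<integral>a. f a (nmc_gamma K phi a) \<partial>P)"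
proof -
  interpret \<Omega>: prob_space \<Omega> by fact
  let ?S = "P \<Otimes>\<^sub>M PiM (UNIV :: nat set) (\<lambda>_. Z)"
  define row where "row n \<omega> = (y n \<omega>, \<lambda>m. z n m \<omega>)" for n \<omega>
  define g where "g a = f a (nmc_gamma K phi a)" for a
  define F where "F M = (\<lambda>(a, zs). f a ((1 / real M) *\<^sub>R (\<Sum>m<M. phi a (zs m))))" for M
  have row [measurable]: "row n \<in> \<Omega> \<rightarrow>\<^sub>M ?S" for n
    using rows_indep by (auto simp: \<Omega>.indep_vars_def row_def[abs_def])
  have g_measurable [measurable]: "g \<in> borel_measurable P"
    using f_integrable by (auto simp: g_def[abs_def])
  have [measurable]: "F M \<in> borel_measurable ?S" for M
    using phi_meas f_meas unfolding F_def by measurable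
  note y0_measurable = measurable_compose[OF row measurable_fst, of 0]
  have law_y0: "distr \<Omega> P (\<lambda>\<omega>. fst (row 0 \<omega>)) = P"
    using distr_distr[OF measurable_fst row, of 0] rows_law[of 0] nmc_row_law_fst[OF K_kernel \<open>prob_space P\<close>]
    by (simp add: row_def[abs_def] comp_def)
  have "\<exists>\<tau>. AE \<omega> in \<Omega>. (\<lambda>M. (1 / real (\<tau> M)) *\<^sub>R (\<Sum>n<\<tau> M. F M (row n \<omega>)))
                        \<longlonglongrightarrow> \<Omega>.expectation (\<lambda>\<omega>. g (fst (row 0 \<omega>)))"
  proof (rule \<Omega>.AE_tendsto_average_diagonal)
    show "\<Omega>.indep_vars (\<lambda>_. ?S) row UNIV" and "distr \<Omega> ?S (row n) = distr \<Omega> ?S (row 0)" for n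
      using rows_indep rows_law by (simp_all add: row_def[abs_def])
    show "integrable \<Omega> (\<lambda>\<omega>. g (fst (row 0 \<omega>)))"
      using integrable_distr_eq[OF y0_measurable g_measurable] f_integrable law_y0 by (simp add: g_def[abs_def])
    show "(\<lambda>M. \<integral>\<^sup>+ \<omega>. norm (F M (row 0 \<omega>) - g (fst (row 0 \<omega>))) \<partial>\<Omega>) \<longlonglongrightarrow> 0"
      using eps_to_0 by (simp add: F_def g_def row_def nmc_eps_def gamma_hat_def)
  qed measurable
  moreover have "\<Omega>.expectation (\<lambda>\<omega>. g (fst (row 0 \<omega>))) = (\<integral>a. f a (nmc_gamma K phi a) \<partial>P)"
    using integral_distr[OF y0_measurable g_measurable] law_y0 by (simp add: g_def[abs_def])
  ultimately show ?thesis
    by (simp add: nmc_I_def gamma_hat_def F_def row_def)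
qed

end
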